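(* Let $h\colon(0,\infty)\to(0,\infty)$ be non-decreasing and continuous, and let $\Theta$ be any one of $\Theta^0_h,\Theta^\infty_h,\Theta_h$. Then either $\lim_{r\to0^+}\Theta(r)=0$, or $\Theta(r)=1$ for every $r\in(0,1]$.
   Context: For $h\colon(0,\infty)\to(0,\infty)$ and $r>0$: $\Theta^0_h(r)=\limsup_{t\to0^+}h(rt)/h(t)$, $\Theta^\infty_h(r)=\limsup_{t\to\infty}h(rt)/h(t)$, $\Theta_h(r)=\sup_{t>0}h(rt)/h(t)$. *)

theory Defs
  imports "HOL-Analysis.Analysis"
begin

text \<open>Dilation indices of h : (0,oo) -> (0,oo), valued in the extended reals
  (they may be +oo for r > 1).\<close>

definition Theta0 :: "(real \<Rightarrow> real) \<Rightarrow> real \<Rightarrow> ereal" where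
  "Theta0 h r = Limsup (at_right 0) (\<lambda>t. ereal (h (r * t) / h t))"

definition ThetaInf :: "(real \<Rightarrow> real) \<Rightarrow> real \<Rightarrow> ereal" where
  "ThetaInf h r = Limsup at_top (\<lambda>t. ereal (h (r * t) / h t))"

definition ThetaSup :: "(real \<Rightarrow> real) \<Rightarrow> real \<Rightarrow> ereal" where
  "ThetaSup h r = (SUP t\<in>{0<..}. ereal (h (r * t) / h t))"

end

theory Submission
  imports Defs
begin

text \<open>Each of the three indices is a limit superior of h(rt)/h(t) along a filter on (0,oo)
  that is invariant under the dilations t \<mapsto> st (for \<Theta>_h, the principal filter of (0,oo)).
  Monotonicity of h makes \<Theta> non-decreasing with values in [0,1] on (0,1], and writing
  h(r^n t)/h(t) as a telescoping product shows \<Theta>(r^n) \<le> q^n whenever \<Theta>(r) < q.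
  So if \<Theta>(r) < 1 for a single r \<le> 1, the values \<Theta>(r^n) tend to 0 and monotonicity
  forces \<Theta> \<rightarrow> 0 at 0+.\<close>

definition dilation_index :: "real filter \<Rightarrow> (real \<Rightarrow> real) \<Rightarrow> real \<Rightarrow> ereal" where
  "dilation_index F h r = Limsup F (\<lambda>t. ereal (h (r * t) / h t))"

definition dilation_invariant :: "real filter \<Rightarrow> bool" where
  "dilation_invariant F \<longleftrightarrow> (\<forall>s>0. filterlim ((*) s) F F)"

lemma Limsup_principal: "Limsup (principal S) f = (SUP x\<in>S. f x)"
proof (rule antisym)
  show "Limsup (principal S) f \<le> (SUP x\<in>S. f x)"
    unfolding Limsup_def eventually_principal
    by (rule INF_lower2[of "\<lambda>x. x \<in> S"]) auto
  show "(SUP x\<in>S. f x) \<le> Limsup (principal S) f"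
    unfolding Limsup_def eventually_principal
    by (rule INF_greatest, rule SUP_subset_mono) auto
qed

lemma Theta0_eq_dilation_index: "Theta0 h = dilation_index (at_right 0) h"
  by (simp add: fun_eq_iff Theta0_def dilation_index_def)

lemma ThetaInf_eq_dilation_index: "ThetaInf h = dilation_index at_top h"
  by (simp add: fun_eq_iff ThetaInf_def dilation_index_def)

lemma ThetaSup_eq_dilation_index: "ThetaSup h = dilation_index (principal {0<..}) h"
  by (simp add: fun_eq_iff ThetaSup_def dilation_index_def Limsup_principal)

lemma dilation_invariant_at_right_0: "dilation_invariant (at_right (0::real))"
  unfolding dilation_invariant_def filterlim_def
  by (simp add: filtermap_times_pos_at_right)

lemma dilation_invariant_at_top: "dilation_invariant (at_top :: real filter)"
  unfolding dilation_invariant_def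
  by (auto intro!: filterlim_tendsto_pos_mult_at_top filterlim_ident)

lemma dilation_invariant_principal_pos: "dilation_invariant (principal {0::real<..})"
  unfolding dilation_invariant_def filterlim_principal eventually_principal by simp

context
  fixes F :: "real filter" and h :: "real \<Rightarrow> real"
  assumes pos: "\<And>t. t > 0 \<Longrightarrow> h t > 0"
    and eventually_pos: "eventually (\<lambda>t. t > 0) F"
begin

lemma dilation_index_nonneg:
  assumes "F \<noteq> bot" "r > 0"
  shows "dilation_index F h r \<ge> 0"
  unfolding dilation_index_def
  by (rule le_Limsup[OF assms(1)], rule eventually_mono[OF eventually_pos])
     (use assms(2) pos in \<open>auto intro!: divide_nonneg_pos less_imp_le\<close>)

lemma dilation_index_mono:
  assumes "mono_on {0<..} h" "0 < r" "r \<le> r'"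
  shows "dilation_index F h r \<le> dilation_index F h r'"
  unfolding dilation_index_def
proof (rule Limsup_mono, rule eventually_mono[OF eventually_pos])
  fix t :: real assume t: "t > 0"
  have "h (r * t) \<le> h (r' * t)"
    using t assms by (intro mono_onD[OF assms(1)]) auto
  then show "ereal (h (r * t) / h t) \<le> ereal (h (r' * t) / h t)"
    using pos[OF t] by (simp add: divide_right_mono)
qed

lemma dilation_index_le_1:
  assumes "mono_on {0<..} h" "0 < r" "r \<le> 1"
  shows "dilation_index F h r \<le> 1"
  unfolding dilation_index_def
proof (rule Limsup_bounded, rule eventually_mono[OF eventually_pos])
  fix t :: real assume t: "t > 0"
  have "h (r * t) \<le> h t"
    using t assms by (intro mono_onD[OF assms(1)]) (auto simp: mult_le_cancel_right1)
  then show "ereal (h (r * t) / h t) \<le> 1"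
    using pos[OF t] by simp
qed

lemma dilation_index_power_le:
  assumes inv: "dilation_invariant F" and "r > 0"
    and less: "dilation_index F h r < ereal q"
  shows "dilation_index F h (r ^ n) \<le> ereal (q ^ n)"
proof -
  have ratio_less: "eventually (\<lambda>t. h (r * t) / h t < q) F"
    using Limsup_lessD[OF less[unfolded dilation_index_def]] by simp
  have "eventually (\<lambda>t. h (r ^ n * t) / h t \<le> q ^ n) F"
  proof (induction n)
    case 0
    show ?case by (rule eventually_mono[OF eventually_pos]) (use pos in auto)
  next
    case (Suc n)
    have "filterlim ((*) (r ^ n)) F F"
      using inv \<open>r > 0\<close> by (simp add: dilation_invariant_def)
    then have shifted: "eventually (\<lambda>t. h (r * (r ^ n * t)) / h (r ^ n * t) < q) F"
      by (rule eventually_compose_filterlim[OF ratio_less])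
    show ?case
      using eventually_pos shifted Suc.IH
    proof eventually_elim
      case (elim t)
      have rnt: "r ^ n * t > 0" and rrnt: "r * (r ^ n * t) > 0"
        using \<open>r > 0\<close> elim(1) by auto
      have split: "h (r ^ Suc n * t) / h t
          = h (r * (r ^ n * t)) / h (r ^ n * t) * (h (r ^ n * t) / h t)"
        using pos[OF rnt] by (simp add: mult.assoc)
      \<comment> \<open>the first factor is positive, so the bound q on it is positive too\<close>
      have "0 < q"
        using elim(2) pos[OF rrnt] pos[OF rnt] by (smt (verit) divide_pos_pos)
      then show ?case
        unfolding split power_Suc[of q]
        using elim pos[OF rnt] pos[OF elim(1)] by (intro mult_mono) auto
    qed
  qed
  then show ?thesis
    unfolding dilation_index_def by (intro Limsup_bounded) simp
qed

end

lemma tendsto_0_at_right_0_if_mono_nonneg: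
  fixes f :: "real \<Rightarrow> ereal"
  assumes nonneg: "\<And>r. r > 0 \<Longrightarrow> f r \<ge> 0"
    and mono: "mono_on {0<..} f"
    and small: "\<And>\<epsilon>. \<epsilon> > 0 \<Longrightarrow> \<exists>r>0. f r \<le> ereal \<epsilon>"
  shows "(f \<longlongrightarrow> 0) (at_right 0)"
proof (rule order_tendstoI)
  fix a :: ereal assume "a < 0"
  show "eventually (\<lambda>r. a < f r) (at_right 0)"
    using eventually_at_right_less[of "0::real"]
    by eventually_elim (use nonneg \<open>a < 0\<close> in \<open>auto intro: order_less_le_trans\<close>)
next
  fix a :: ereal assume "0 < a"
  then obtain \<epsilon> where \<epsilon>: "\<epsilon> > 0" "ereal \<epsilon> < a"
    using ereal_dense2 by (metis ereal_less(2) not_le order_less_le_trans zero_ereal_def)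
  then obtain r where r: "r > 0" "f r \<le> ereal \<epsilon>"
    using small by blast
  have "f s < a" if "0 < s" "s < r" for s
    using mono_onD[OF mono, of s r] that r \<epsilon> by auto
  then show "eventually (\<lambda>s. f s < a) (at_right 0)"
    unfolding eventually_at_right_field using \<open>r > 0\<close> by blast
qed

theorem dilation_index_dichotomy:
  fixes F :: "real filter" and h :: "real \<Rightarrow> real"
  assumes pos: "\<And>t. t > 0 \<Longrightarrow> h t > 0"
    and mono: "mono_on {0<..} h"
    and nontrivial: "F \<noteq> bot"
    and eventually_pos: "eventually (\<lambda>t. t > 0) F"
    and inv: "dilation_invariant F"
  shows "(dilation_index F h \<longlongrightarrow> 0) (at_right 0) \<or> (\<forall>r\<in>{0<..1}. dilation_index F h r = 1)"
proof (rule disjCI)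
  let ?\<Theta> = "dilation_index F h"
  assume "\<not> (\<forall>r\<in>{0<..1}. ?\<Theta> r = 1)"
  then obtain r where r: "0 < r" "r \<le> 1" "?\<Theta> r \<noteq> 1"
    by auto
  then have "?\<Theta> r < 1"
    using dilation_index_le_1[OF pos eventually_pos mono] by (simp add: order_less_le)
  then obtain q :: real where q: "?\<Theta> r < q" "q < 1"
    using ereal_dense2 by fastforce
  show "(?\<Theta> \<longlongrightarrow> 0) (at_right 0)"
  proof (rule tendsto_0_at_right_0_if_mono_nonneg)
    show "\<And>r. r > 0 \<Longrightarrow> ?\<Theta> r \<ge> 0"
      using dilation_index_nonneg[OF pos eventually_pos nontrivial] .
    show "mono_on {0<..} ?\<Theta>"
      by (intro mono_onI dilation_index_mono[OF pos eventually_pos mono]) auto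
    fix \<epsilon> :: real assume "\<epsilon> > 0"
    then obtain n where "q ^ n < \<epsilon>"
      using real_arch_pow_inv[OF _ q(2)] by blast
    then have "?\<Theta> (r ^ n) \<le> ereal \<epsilon>"
      using dilation_index_power_le[OF pos eventually_pos inv \<open>r > 0\<close> q(1)]
      by (meson ereal_less_eq(3) less_imp_le order_trans)
    then show "\<exists>s>0. ?\<Theta> s \<le> ereal \<epsilon>"
      using \<open>r > 0\<close> by (intro exI[of _ "r ^ n"]) simp
  qed
qed

theorem corollary4p6:
  fixes h :: "real \<Rightarrow> real" and \<Theta> :: "real \<Rightarrow> ereal"
  assumes pos: "\<And>t. t > 0 \<Longrightarrow> h t > 0"
    and mono: "mono_on {0<..} h"
    and cont: "continuous_on {0<..} h"
    and Theta: "\<Theta> \<in> {Theta0 h, ThetaInf h, ThetaSup h}"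
  shows "(\<Theta> \<longlongrightarrow> 0) (at_right 0) \<or> (\<forall>r\<in>{0<..1}. \<Theta> r = 1)"
proof -
  consider "\<Theta> = dilation_index (at_right 0) h" | "\<Theta> = dilation_index at_top h"
    | "\<Theta> = dilation_index (principal {0<..}) h"
    using Theta
    unfolding Theta0_eq_dilation_index ThetaInf_eq_dilation_index ThetaSup_eq_dilation_index
    by blast
  then obtain F where "\<Theta> = dilation_index F h" "F \<noteq> bot" "eventually (\<lambda>t. t > 0) F"
      "dilation_invariant F"
  proof cases
    case 1
    then show ?thesis
      by (rule that) (simp_all add: dilation_invariant_at_right_0 eventually_at_right_less)
  next
    case 2
    then show ?thesis
      by (rule that) (simp_all add: dilation_invariant_at_top eventually_gt_at_top)
  next
    case 3
    then show ?thesis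
      by (rule that)
        (simp_all add: dilation_invariant_principal_pos eventually_principal principal_eq_bot_iff)
  qed
  then show ?thesis
    using dilation_index_dichotomy[OF pos mono] by blast
qed

end
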